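(* Let $D$ be a pre-divergence on a Polish space $\mathcal{X}$ and $c$ a cost function such that (1) whenever $\mu_n,\mu\in\mathcal{P}(\mathcal{X})$ satisfy $D(\mu_n\|\mu)\to0$, then $\mu_n\to\mu$ weakly; and (2) $c(x_1,x_2)=0$ if and only if $x_1=x_2$. Then $D^c$ has the divergence property: for all $\mu,\nu\in\mathcal{P}(\mathcal{X})$, $D^c(\nu\|\mu)=0$ if and only if $\nu=\mu$.
   Context: $\mathcal{P}(\mathcal{X})$ is the set of Borel probability measures on the Polish space $\mathcal{X}$, with the weak convergence topology. A pre-divergence is $D:\mathcal{P}(\mathcal{X})\times\mathcal{P}(\mathcal{X})\to[0,\infty]$ with $D(\mu\|\mu)=0$ for all $\mu$. A cost function is a lower semicontinuous $c:\mathcal{X}\times\mathcal{X}\to[0,\infty]$, with OT cost $C(\mu,\nu)=\inf\{\int c\,d\pi:\pi\in\mathcal{P}(\mathcal{X}\times\mathcal{X}),\pi_1=\mu,\pi_2=\nu\}$. $D^c(\nu\|\mu)=\inf_{\eta\in\mathcal{P}(\mathcal{X})}\{D(\eta\|\mu)+C(\eta,\nu)\}$. *)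

theory Defs
  imports "HOL-Probability.Probability"
begin

definition prob_measures :: "'a::topological_space measure set" where
  "prob_measures = {M. prob_space M \<and> sets M = sets (borel :: 'a measure)}"

definition weak_conv :: "(nat \<Rightarrow> 'a::topological_space measure) \<Rightarrow> 'a measure \<Rightarrow> bool" where
  "weak_conv Ms M \<longleftrightarrow>
     (\<forall>f :: 'a \<Rightarrow> real. continuous_on UNIV f \<and> bounded (range f) \<longrightarrow>
        (\<lambda>n. integral\<^sup>L (Ms n) f) \<longlonglongrightarrow> integral\<^sup>L M f)"

definition pre_divergence :: "('a::topological_space measure \<Rightarrow> 'a measure \<Rightarrow> ennreal) \<Rightarrow> bool" where
  "pre_divergence D \<longleftrightarrow> (\<forall>\<mu>\<in>prob_measures. D \<mu> \<mu> = 0)"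

definition lsc :: "('b::topological_space \<Rightarrow> ennreal) \<Rightarrow> bool" where
  "lsc f \<longleftrightarrow> (\<forall>t. open {x. t < f x})"

definition couplings :: "'a::topological_space measure \<Rightarrow> 'a measure \<Rightarrow> ('a \<times> 'a) measure set" where
  "couplings \<mu> \<nu> = {\<pi>. \<pi> \<in> prob_measures \<and> distr \<pi> borel fst = \<mu> \<and> distr \<pi> borel snd = \<nu>}"

definition OT_cost :: "('a::topological_space \<times> 'a \<Rightarrow> ennreal) \<Rightarrow> 'a measure \<Rightarrow> 'a measure \<Rightarrow> ennreal" where
  "OT_cost c \<mu> \<nu> = (INF \<pi>\<in>couplings \<mu> \<nu>. \<integral>\<^sup>+ z. c z \<partial>\<pi>)"

definition D_c :: "('a::topological_space measure \<Rightarrow> 'a measure \<Rightarrow> ennreal) \<Rightarrow> ('a \<times> 'a \<Rightarrow> ennreal)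
                  \<Rightarrow> 'a measure \<Rightarrow> 'a measure \<Rightarrow> ennreal" where
  "D_c D c \<nu> \<mu> = (INF \<eta>\<in>prob_measures. D \<eta> \<mu> + OT_cost c \<eta> \<nu>)"

end

theory Submission
  imports Defs
begin

text \<open>
  If \<open>D\<^sup>c(\<nu>\<parallel>\<mu>) = 0\<close>, there are \<open>\<eta>\<^sub>n\<close> with \<open>D(\<eta>\<^sub>n\<parallel>\<mu>) \<rightarrow> 0\<close>, hence \<open>\<eta>\<^sub>n \<rightarrow> \<mu>\<close> weakly,
  and couplings \<open>\<pi>\<^sub>n\<close> of \<open>\<eta>\<^sub>n\<close> and \<open>\<nu>\<close> with \<open>\<integral>c d\<pi>\<^sub>n \<rightarrow> 0\<close>. Instead of extracting a weakly
  convergent subsequence of the \<open>\<pi>\<^sub>n\<close> (Prokhorov), we argue quantitatively. By tightness,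
  some compact \<open>K\<close> carries all but \<open>\<epsilon>\<close> of both \<open>\<mu>\<close> and \<open>\<nu>\<close>; since \<open>c\<close> is lower
  semicontinuous and vanishes only on the diagonal, it is bounded below by some \<open>m > 0\<close>
  on pairs that lie near \<open>K\<close> and are at least \<open>\<delta>\<close> apart. For \<open>f\<close> \<open>k\<close>-Lipschitz with
  values in \<open>[0,1]\<close>, integrating \<open>\<bar>f x - f y\<bar>\<close> against \<open>\<pi>\<^sub>n\<close> and letting \<open>n \<rightarrow> \<infinity>\<close> gives
  \<open>\<bar>\<integral>f d\<mu> - \<integral>f d\<nu>\<bar> \<le> k\<delta> + 2\<epsilon>\<close>. So \<open>\<mu>\<close> and \<open>\<nu>\<close> agree on bounded Lipschitz functions,
  which determine Borel probability measures on a metric space. Conversely, the diagonal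
  coupling shows \<open>D\<^sup>c(\<mu>\<parallel>\<mu>) = 0\<close>.
\<close>

lemma prob_space_prob_measures: "P \<in> prob_measures \<Longrightarrow> prob_space P"
  by (simp add: prob_measures_def)

lemma sets_prob_measures: "P \<in> prob_measures \<Longrightarrow> sets P = sets borel"
  by (simp add: prob_measures_def)

lemma space_prob_measures: "P \<in> prob_measures \<Longrightarrow> space P = UNIV"
  by (metis sets_prob_measures sets_eq_imp_space_eq space_borel)

lemma measurable_prob_measuresI: "P \<in> prob_measures \<Longrightarrow> f \<in> borel \<rightarrow>\<^sub>M N \<Longrightarrow> f \<in> P \<rightarrow>\<^sub>M N"
  by (subst measurable_cong_sets[OF sets_prob_measures refl])

lemma integrable_prob_measuresI:
  fixes f :: "'a::topological_space \<Rightarrow> real"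
  assumes "P \<in> prob_measures" "f \<in> borel_measurable borel" "\<And>x. \<bar>f x\<bar> \<le> B"
  shows "integrable P f"
proof -
  interpret prob_space P using prob_space_prob_measures[OF assms(1)] .
  have "f \<in> borel_measurable P"
    by (rule measurable_prob_measuresI[OF assms(1,2)])
  then show ?thesis
    using assms(3) by (intro integrable_const_bound[where B=B]) auto
qed

lemma prob_measures_tight:
  fixes P :: "'a::polish_space measure"
  assumes P: "P \<in> prob_measures" and "0 < \<epsilon>"
  obtains K where "compact K" "measure P (- K) < \<epsilon>"
proof -
  interpret prob_space P using prob_space_prob_measures[OF P] .
  have "emeasure P UNIV = (SUP K \<in> {K. compact K}. emeasure P K)"
    using inner_regular[of P UNIV] sets_prob_measures[OF P] by simp
  moreover have "emeasure P UNIV = 1"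
    using emeasure_space_1 space_prob_measures[OF P] by simp
  moreover have "ennreal (1 - \<epsilon>) < 1"
    using \<open>0 < \<epsilon>\<close> by (cases "\<epsilon> \<le> 1") (auto simp: ennreal_lessI ennreal_neg)
  ultimately have "ennreal (1 - \<epsilon>) < (SUP K \<in> {K. compact K}. emeasure P K)"
    by simp
  then obtain K where K: "compact K" "ennreal (1 - \<epsilon>) < emeasure P K"
    by (auto simp: less_SUP_iff)
  have "K \<in> sets P"
    using sets_prob_measures[OF P] compact_imp_closed[OF K(1)] by auto
  then have "measure P (- K) = 1 - measure P K"
    using prob_compl space_prob_measures[OF P] by (simp add: Compl_eq_Diff_UNIV)
  moreover have "1 - \<epsilon> < measure P K"
  proof (cases "0 \<le> 1 - \<epsilon>")
    case True
    then show ?thesis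
      using K(2) by (simp add: emeasure_eq_measure ennreal_less_iff)
  next
    case False
    then show ?thesis
      using measure_nonneg[of P K] by linarith
  qed
  ultimately show thesis
    by (intro that[OF K(1)]) linarith
qed

lemma measure_Compl_antimono_prob_measures:
  assumes "P \<in> prob_measures" "closed K" "K \<subseteq> L"
  shows "measure P (- L) \<le> measure P (- K)"
proof -
  interpret prob_space P using prob_space_prob_measures[OF assms(1)] .
  show ?thesis
    using assms sets_prob_measures[OF assms(1)] by (intro finite_measure_mono) auto
qed

lemma prob_measures_tight_pair:
  fixes \<mu> \<nu> :: "'a::polish_space measure"
  assumes \<mu>: "\<mu> \<in> prob_measures" and \<nu>: "\<nu> \<in> prob_measures" and "0 < \<epsilon>"
  obtains K where "compact K" "K \<noteq> {}" "measure \<mu> (- K) < \<epsilon>" "measure \<nu> (- K) < \<epsilon>"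
proof -
  obtain K1 where K1: "compact K1" "measure \<mu> (- K1) < \<epsilon>"
    using prob_measures_tight[OF \<mu> \<open>0 < \<epsilon>\<close>] .
  obtain K2 where K2: "compact K2" "measure \<nu> (- K2) < \<epsilon>"
    using prob_measures_tight[OF \<nu> \<open>0 < \<epsilon>\<close>] .
  define K where "K = insert undefined (K1 \<union> K2)"
  have "K1 \<subseteq> K" "K2 \<subseteq> K"
    by (auto simp: K_def)
  then have "measure \<mu> (- K) < \<epsilon>" "measure \<nu> (- K) < \<epsilon>"
    using measure_Compl_antimono_prob_measures[OF \<mu> compact_imp_closed[OF K1(1)]]
      measure_Compl_antimono_prob_measures[OF \<nu> compact_imp_closed[OF K2(1)]] K1(2) K2(2)
    by (meson le_less_trans)+
  moreover have "compact K"
    unfolding K_def using K1(1) K2(1) by (simp add: compact_Un compact_insert)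
  ultimately show thesis
    by (intro that) (auto simp: K_def)
qed

lemma integral_infdist_ramp_le_measure_Compl:
  fixes K :: "'a::metric_space set"
  assumes P: "P \<in> prob_measures" and "closed K" "0 < r"
  shows "(\<integral>x. min 1 (infdist x K / r) \<partial>P) \<le> measure P (- K)"
proof -
  have ramp: "(\<lambda>x. min 1 (infdist x K / r)) \<in> borel_measurable borel"
    by (intro borel_measurable_continuous_onI continuous_intros continuous_on_infdist)
      (use assms in auto)
  have ramp_bounds: "0 \<le> min 1 (infdist x K / r)" "min 1 (infdist x K / r) \<le> 1" for x
    using \<open>0 < r\<close> by (simp_all add: infdist_nonneg)
  have ind: "(indicator (- K) :: 'a \<Rightarrow> real) \<in> borel_measurable borel"
    using \<open>closed K\<close> by (intro borel_measurable_indicator) auto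
  have "(\<integral>x. min 1 (infdist x K / r) \<partial>P) \<le> (\<integral>x. indicator (- K) x \<partial>P)"
  proof (rule integral_mono)
    show "integrable P (\<lambda>x. min 1 (infdist x K / r))"
      by (rule integrable_prob_measuresI[OF P ramp, where B=1]) (metis abs_of_nonneg ramp_bounds)
    show "integrable P (indicator (- K) :: 'a \<Rightarrow> real)"
      by (rule integrable_prob_measuresI[OF P ind, where B=1]) simp
    show "min 1 (infdist x K / r) \<le> indicator (- K) x" for x
      using ramp_bounds[of x] by (cases "x \<in> K") simp_all
  qed
  then show ?thesis
    using space_prob_measures[OF P] by simp
qed

lemma weak_convD:
  fixes f :: "'a::topological_space \<Rightarrow> real"
  assumes "weak_conv Ms M" "continuous_on UNIV f" "\<And>x. \<bar>f x\<bar> \<le> B"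
  shows "(\<lambda>n. \<integral>x. f x \<partial>Ms n) \<longlonglongrightarrow> (\<integral>x. f x \<partial>M)"
  using assms unfolding weak_conv_def bounded_iff by auto

definition infdist_cutoff :: "nat \<Rightarrow> 'a::metric_space set \<Rightarrow> 'a \<Rightarrow> real" where
  "infdist_cutoff k F x = max 0 (1 - real k * infdist x F)"

lemma infdist_cutoff_bounds: "0 \<le> infdist_cutoff k F x" "infdist_cutoff k F x \<le> 1"
  by (simp_all add: infdist_cutoff_def infdist_nonneg)

lemma lipschitz_on_infdist_cutoff: "(real k)-lipschitz_on UNIV (infdist_cutoff k F)"
proof (rule lipschitz_onI)
  fix x y
  have "\<bar>infdist x F - infdist y F\<bar> \<le> dist x y"
    by (rule infdist_triangle_abs)
  then have "\<bar>real k * infdist x F - real k * infdist y F\<bar> \<le> real k * dist x y"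
    by (metis abs_mult abs_of_nat mult_left_mono of_nat_0_le_iff right_diff_distrib)
  then show "dist (infdist_cutoff k F x) (infdist_cutoff k F y) \<le> real k * dist x y"
    unfolding dist_real_def infdist_cutoff_def by linarith
qed simp

lemma infdist_cutoff_tendsto_indicator:
  assumes "closed F" "F \<noteq> {}"
  shows "(\<lambda>k. infdist_cutoff k F x) \<longlonglongrightarrow> indicator F x"
proof (cases "x \<in> F")
  case True
  then show ?thesis
    by (simp add: infdist_cutoff_def)
next
  case False
  then have "0 < infdist x F"
    using infdist_pos_not_in_closed assms by blast
  then obtain N where N: "1 / infdist x F < real N"
    using reals_Archimedean2 by blast
  have "infdist_cutoff k F x = indicator F x" if "N \<le> k" for k
  proof -
    have "real N \<le> real k"
      using that by simp
    then have "1 / infdist x F < real k"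
      using N by linarith
    then have "1 < real k * infdist x F"
      using \<open>0 < infdist x F\<close> by (simp add: divide_less_eq)
    then show ?thesis
      using False by (simp add: infdist_cutoff_def)
  qed
  then show ?thesis
    by (intro tendsto_eventually eventually_sequentiallyI)
qed

lemma integral_infdist_cutoff_tendsto:
  assumes P: "P \<in> prob_measures" and F: "closed F" "F \<noteq> {}"
  shows "(\<lambda>k. \<integral>x. infdist_cutoff k F x \<partial>P) \<longlonglongrightarrow> measure P F"
proof -
  have "(\<lambda>k. \<integral>x. infdist_cutoff k F x \<partial>P) \<longlonglongrightarrow> (\<integral>x. indicator F x \<partial>P)"
  proof (rule integral_dominated_convergence[where w="\<lambda>_. 1"])
    show "indicator F \<in> borel_measurable P"
      using sets_prob_measures[OF P] F(1) by (intro borel_measurable_indicator) simp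
    show "infdist_cutoff k F \<in> borel_measurable P" for k
      using lipschitz_on_continuous_on[OF lipschitz_on_infdist_cutoff]
      by (intro measurable_prob_measuresI[OF P] borel_measurable_continuous_onI)
    show "integrable P (\<lambda>_. 1::real)"
      by (rule integrable_prob_measuresI[OF P, where B=1]) auto
    show "AE x in P. (\<lambda>k. infdist_cutoff k F x) \<longlonglongrightarrow> indicator F x"
      using infdist_cutoff_tendsto_indicator[OF F] by simp
    show "AE x in P. norm (infdist_cutoff k F x) \<le> 1" for k
      by (intro AE_I2) (metis abs_of_nonneg infdist_cutoff_bounds real_norm_def)
  qed
  then show ?thesis
    using space_prob_measures[OF P] by simp
qed

lemma prob_measures_eqI_lipschitz:
  fixes \<mu> \<nu> :: "'a::metric_space measure"
  assumes \<mu>: "\<mu> \<in> prob_measures" and \<nu>: "\<nu> \<in> prob_measures"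
    and eq: "\<And>(f :: 'a \<Rightarrow> real) k. k-lipschitz_on UNIV f \<Longrightarrow> (\<And>x. f x \<in> {0..1}) \<Longrightarrow>
      (\<integral>x. f x \<partial>\<mu>) = (\<integral>x. f x \<partial>\<nu>)"
  shows "\<mu> = \<nu>"
proof -
  interpret M: prob_space \<mu> using prob_space_prob_measures[OF \<mu>] .
  interpret N: prob_space \<nu> using prob_space_prob_measures[OF \<nu>] .
  have "measure \<mu> F = measure \<nu> F" if "closed F" "F \<noteq> {}" for F
  proof (rule LIMSEQ_unique)
    have "(\<integral>x. infdist_cutoff k F x \<partial>\<mu>) = (\<integral>x. infdist_cutoff k F x \<partial>\<nu>)" for k
      using lipschitz_on_infdist_cutoff infdist_cutoff_bounds by (intro eq) auto
    then show "(\<lambda>k. \<integral>x. infdist_cutoff k F x \<partial>\<mu>) \<longlonglongrightarrow> measure \<nu> F"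
      using integral_infdist_cutoff_tendsto[OF \<nu> that] by simp
  qed (rule integral_infdist_cutoff_tendsto[OF \<mu> that])
  then have "emeasure \<mu> F = emeasure \<nu> F" if "closed F" for F
    using that by (cases "F = {}") (simp_all add: M.emeasure_eq_measure N.emeasure_eq_measure)
  moreover have "sets (borel :: 'a measure) = sigma_sets UNIV (Collect closed)"
    by (subst borel_eq_closed) (simp add: sets_measure_of)
  ultimately show ?thesis
    using sets_prob_measures[OF \<mu>] sets_prob_measures[OF \<nu>]
    by (intro measure_eqI_generator_eq[where E="Collect closed" and \<Omega>=UNIV and A="\<lambda>_. UNIV"])
      (auto simp: Int_stable_def closed_Int)
qed

lemma borel_measurable_lsc:
  fixes c :: "'a::topological_space \<Rightarrow> ennreal"
  assumes "lsc c"
  shows "c \<in> borel_measurable borel"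
  by (rule borel_measurableI_greater) (use assms in \<open>auto simp: lsc_def\<close>)

lemma lsc_bounded_below_on_compact:
  fixes c :: "'a::topological_space \<Rightarrow> ennreal"
  assumes lsc: "lsc c" and S: "compact S" and pos: "\<And>z. z \<in> S \<Longrightarrow> c z \<noteq> 0"
  obtains m where "0 < m" "\<And>z. z \<in> S \<Longrightarrow> ennreal m < c z"
proof -
  define U where "U n = {z. ennreal (inverse (Suc n)) < c z}" for n :: nat
  have U_open: "open (U n)" for n
    using lsc by (simp add: U_def lsc_def)
  have U_mono: "U n \<subseteq> U n'" if "n \<le> n'" for n n'
  proof -
    have "ennreal (inverse (Suc n')) \<le> ennreal (inverse (Suc n))"
      using that by (intro ennreal_leI) (simp add: field_simps)
    then show ?thesis
      unfolding U_def using order.strict_trans1 by blast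
  qed
  have cover: "S \<subseteq> (\<Union>n. U n)"
  proof
    fix z assume "z \<in> S"
    have "(\<lambda>n. ennreal (inverse (Suc n))) \<longlonglongrightarrow> 0"
      using tendsto_ennrealI[OF LIMSEQ_inverse_real_of_nat] by simp
    moreover have "0 < c z"
      using pos[OF \<open>z \<in> S\<close>] not_gr_zero by blast
    ultimately have "\<forall>\<^sub>F n in sequentially. ennreal (inverse (Suc n)) < c z"
      by (rule order_tendstoD)
    then obtain n where "ennreal (inverse (Suc n)) < c z"
      by (auto simp: eventually_sequentially)
    then show "z \<in> (\<Union>n. U n)"
      by (auto simp: U_def)
  qed
  obtain N where N: "N \<subseteq> UNIV" "finite N" "S \<subseteq> (\<Union>n\<in>N. U n)"
    by (rule compactE_image[OF S, of UNIV U]) (use U_open cover in auto)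
  define M where "M = Max (insert 0 N)"
  show thesis
  proof (rule that[of "inverse (Suc M)"])
    fix z assume "z \<in> S"
    then obtain n where "n \<in> N" "z \<in> U n"
      using N by blast
    then have "z \<in> U M"
      using U_mono[of n M] N(2) by (auto simp: M_def)
    then show "ennreal (inverse (Suc M)) < c z"
      by (simp add: U_def)
  qed simp
qed

lemma lsc_bounded_below_near_compact:
  fixes c :: "'a::metric_space \<Rightarrow> ennreal"
  assumes lsc: "lsc c" and S: "compact S" and pos: "\<And>z. z \<in> S \<Longrightarrow> c z \<noteq> 0"
  obtains m e where "0 < m" "0 < e" "\<And>z p. p \<in> S \<Longrightarrow> dist z p < e \<Longrightarrow> ennreal m < c z"
proof -
  obtain m where "0 < m" and m: "\<And>z. z \<in> S \<Longrightarrow> ennreal m < c z"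
    using lsc_bounded_below_on_compact[OF lsc S pos] by blast
  have "open {z. ennreal m < c z}"
    using lsc by (simp add: lsc_def)
  moreover have "S \<subseteq> {z. ennreal m < c z}"
    using m by blast
  ultimately obtain e where e: "0 < e" "(\<Union>p\<in>S. ball p e) \<subseteq> {z. ennreal m < c z}"
    using compact_subset_open_imp_ball_epsilon_subset[OF S] by blast
  show thesis
  proof (rule that[OF \<open>0 < m\<close> e(1)])
    fix z p assume "p \<in> S" "dist z p < e"
    then have "z \<in> ball p e"
      by (simp add: dist_commute)
    then show "ennreal m < c z"
      using subsetD[OF e(2) UN_I[OF \<open>p \<in> S\<close>]] by blast
  qed
qed

lemma dist_Pair_le_add: "dist (x, y) (a, b) \<le> dist x a + dist y b"
  unfolding dist_Pair_Pair using sqrt_sum_squares_le_sum_abs[of "dist x a" "dist y b"] by simp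

lemma infdist_lessE:
  assumes "K \<noteq> {}" "infdist x K < r"
  obtains a where "a \<in> K" "dist x a < r"
  using assms by (auto simp: infdist_notempty cINF_less_iff)

lemma lsc_cost_separated_near_compact:
  fixes c :: "'a::metric_space \<times> 'a \<Rightarrow> ennreal"
  assumes lsc: "lsc c" and diag: "\<And>x y. c (x, y) = 0 \<Longrightarrow> x = y"
    and K: "compact K" "K \<noteq> {}" and "0 < \<delta>"
  obtains r m where "0 < r" "0 < m"
    "\<And>x y. infdist x K < r \<Longrightarrow> infdist y K < r \<Longrightarrow> \<delta> \<le> dist x y \<Longrightarrow> ennreal m < c (x, y)"
proof -
  \<comment> \<open>pairs near \<open>K\<close> that are \<open>\<delta>\<close> apart are close to pairs in \<open>K \<times> K\<close> that are \<open>\<delta>/2\<close> apart\<close>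
  define S where "S = (K \<times> K) \<inter> {p. \<delta> / 2 \<le> dist (fst p) (snd p)}"
  have "closed {p :: 'a \<times> 'a. \<delta> / 2 \<le> dist (fst p) (snd p)}"
    by (intro closed_Collect_le continuous_intros)
  then have S_compact: "compact S"
    unfolding S_def using K(1) by (intro compact_Int_closed compact_Times)
  have S_pos: "c p \<noteq> 0" if "p \<in> S" for p
    using that diag[of "fst p" "snd p"] \<open>0 < \<delta>\<close> by (auto simp: S_def)
  obtain m e where me: "0 < m" "0 < e"
    and bound: "\<And>z p. p \<in> S \<Longrightarrow> dist z p < e \<Longrightarrow> ennreal m < c z"
    using lsc_bounded_below_near_compact[OF lsc S_compact S_pos] by blast
  show thesis
  proof (rule that[of "min (\<delta> / 4) (e / 2)" m])
    fix x y
    assume x: "infdist x K < min (\<delta> / 4) (e / 2)" and y: "infdist y K < min (\<delta> / 4) (e / 2)"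
      and "\<delta> \<le> dist x y"
    obtain a where a: "a \<in> K" "dist x a < min (\<delta> / 4) (e / 2)"
      using infdist_lessE[OF K(2) x] .
    obtain b where b: "b \<in> K" "dist y b < min (\<delta> / 4) (e / 2)"
      using infdist_lessE[OF K(2) y] .
    have "dist x y \<le> dist x a + dist a b + dist y b"
      using dist_triangle[of x y a] dist_triangle[of a y b] dist_commute[of b y] by linarith
    then have "(a, b) \<in> S"
      using a b \<open>\<delta> \<le> dist x y\<close> by (auto simp: S_def)
    moreover have "dist (x, y) (a, b) < e"
      using dist_Pair_le_add[of x y a b] a(2) b(2) by linarith
    ultimately show "ennreal m < c (x, y)"
      by (rule bound)
  qed (use me \<open>0 < \<delta>\<close> in auto)
qed

lemma prob_measures_couplings: "\<pi> \<in> couplings \<alpha> \<beta> \<Longrightarrow> \<pi> \<in> prob_measures"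
  by (simp add: couplings_def)

lemma measurable_fst_snd_couplings:
  assumes "\<pi> \<in> couplings \<alpha> \<beta>"
  shows "fst \<in> \<pi> \<rightarrow>\<^sub>M borel" "snd \<in> \<pi> \<rightarrow>\<^sub>M borel"
  by (auto intro!: measurable_prob_measuresI[OF prob_measures_couplings[OF assms]]
      borel_measurable_continuous_onI continuous_intros)

lemma integral_couplings:
  fixes g :: "'a::topological_space \<Rightarrow> real"
  assumes \<pi>: "\<pi> \<in> couplings \<alpha> \<beta>" and g: "g \<in> borel_measurable borel"
  shows "(\<integral>z. g (fst z) \<partial>\<pi>) = (\<integral>x. g x \<partial>\<alpha>)" "(\<integral>z. g (snd z) \<partial>\<pi>) = (\<integral>x. g x \<partial>\<beta>)"
proof -
  have "\<alpha> = distr \<pi> borel fst" "\<beta> = distr \<pi> borel snd"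
    using \<pi> by (auto simp: couplings_def)
  then show "(\<integral>z. g (fst z) \<partial>\<pi>) = (\<integral>x. g x \<partial>\<alpha>)" "(\<integral>z. g (snd z) \<partial>\<pi>) = (\<integral>x. g x \<partial>\<beta>)"
    using integral_distr[OF _ g, symmetric] measurable_fst_snd_couplings[OF \<pi>] by metis+
qed

lemma integrable_couplings:
  fixes g :: "'a::topological_space \<Rightarrow> real"
  assumes \<pi>: "\<pi> \<in> couplings \<alpha> \<beta>" and g: "g \<in> borel_measurable borel" "\<And>x. \<bar>g x\<bar> \<le> B"
  shows "integrable \<pi> (\<lambda>z. g (fst z))" "integrable \<pi> (\<lambda>z. g (snd z))"
proof -
  interpret prob_space \<pi>
    using prob_space_prob_measures[OF prob_measures_couplings[OF \<pi>]] .
  show "integrable \<pi> (\<lambda>z. g (fst z))" "integrable \<pi> (\<lambda>z. g (snd z))"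
    using measurable_compose[OF measurable_fst_snd_couplings(1)[OF \<pi>] g(1)]
      measurable_compose[OF measurable_fst_snd_couplings(2)[OF \<pi>] g(1)] g(2)
    by (auto intro: integrable_const_bound[where B=B])
qed

lemma abs_integral_diff_le_coupling:
  fixes f :: "'a::topological_space \<Rightarrow> real"
  assumes \<pi>: "\<pi> \<in> couplings \<alpha> \<beta>"
    and f: "f \<in> borel_measurable borel" "\<And>x. \<bar>f x\<bar> \<le> B"
    and g: "integrable \<pi> g" "\<And>x y. \<bar>f x - f y\<bar> \<le> g (x, y)"
  shows "\<bar>(\<integral>x. f x \<partial>\<alpha>) - (\<integral>x. f x \<partial>\<beta>)\<bar> \<le> (\<integral>z. g z \<partial>\<pi>)"
proof -
  note int = integrable_couplings[OF \<pi> f]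
  have "(\<integral>x. f x \<partial>\<alpha>) - (\<integral>x. f x \<partial>\<beta>) = (\<integral>z. f (fst z) - f (snd z) \<partial>\<pi>)"
    using integral_couplings[OF \<pi> f(1)] int by simp
  also have "\<bar>\<dots>\<bar> \<le> (\<integral>z. \<bar>f (fst z) - f (snd z)\<bar> \<partial>\<pi>)"
    by (rule integral_abs_bound)
  also have "\<dots> \<le> (\<integral>z. g z \<partial>\<pi>)"
    using int g by (intro integral_mono) auto
  finally show ?thesis .
qed

lemma diagonal_couplings:
  assumes \<mu>: "\<mu> \<in> prob_measures"
  shows "distr \<mu> borel (\<lambda>x. (x, x)) \<in> couplings \<mu> \<mu>"
proof -
  interpret prob_space \<mu> using prob_space_prob_measures[OF \<mu>] .
  have diag: "(\<lambda>x. (x, x)) \<in> \<mu> \<rightarrow>\<^sub>M borel"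
    by (intro measurable_prob_measuresI[OF \<mu>] borel_measurable_continuous_onI continuous_intros)
  have marginal: "distr (distr \<mu> borel (\<lambda>x. (x, x))) borel p = \<mu>"
    if "p \<in> borel \<rightarrow>\<^sub>M borel" "\<And>x. p (x, x) = x" for p :: "'a \<times> 'a \<Rightarrow> 'a"
  proof -
    have "distr (distr \<mu> borel (\<lambda>x. (x, x))) borel p = distr \<mu> borel (p \<circ> (\<lambda>x. (x, x)))"
      by (rule distr_distr[OF that(1) diag])
    also have "\<dots> = \<mu>"
      using that(2) distr_id2[OF sets_prob_measures[OF \<mu>, symmetric]] by (simp add: comp_def)
    finally show ?thesis .
  qed
  have "distr (distr \<mu> borel (\<lambda>x. (x, x))) borel fst = \<mu>"
    "distr (distr \<mu> borel (\<lambda>x. (x, x))) borel snd = \<mu>"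
    by (auto intro!: marginal borel_measurable_continuous_onI continuous_intros)
  then show ?thesis
    using prob_space_distr[OF diag] unfolding couplings_def prob_measures_def by simp
qed

lemma OT_cost_self_eq_0:
  assumes \<mu>: "\<mu> \<in> prob_measures" and c: "c \<in> borel_measurable borel" and diag: "\<And>x. c (x, x) = 0"
  shows "OT_cost c \<mu> \<mu> = 0"
proof -
  have diag_meas: "(\<lambda>x. (x, x)) \<in> \<mu> \<rightarrow>\<^sub>M borel"
    by (intro measurable_prob_measuresI[OF \<mu>] borel_measurable_continuous_onI continuous_intros)
  have "OT_cost c \<mu> \<mu> \<le> (\<integral>\<^sup>+z. c z \<partial>distr \<mu> borel (\<lambda>x. (x, x)))"
    unfolding OT_cost_def by (rule INF_lower[OF diagonal_couplings[OF \<mu>]])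
  also have "\<dots> = (\<integral>\<^sup>+x. c (x, x) \<partial>\<mu>)"
    using c by (intro nn_integral_distr[OF diag_meas]) simp
  finally show ?thesis
    by (simp add: diag)
qed

lemma D_c_self_eq_0:
  assumes "pre_divergence D" "\<mu> \<in> prob_measures" "OT_cost c \<mu> \<mu> = 0"
  shows "D_c D c \<mu> \<mu> = 0"
proof -
  have "D_c D c \<mu> \<mu> \<le> D \<mu> \<mu> + OT_cost c \<mu> \<mu>"
    unfolding D_c_def by (rule INF_lower) fact
  then show ?thesis
    using assms by (simp add: pre_divergence_def)
qed

lemma D_c_eq_0_imp_approximating_couplings:
  assumes "D_c D c \<nu> \<mu> = 0"
  obtains \<eta> \<pi> where "\<And>n. \<eta> n \<in> prob_measures" "\<And>n. \<pi> n \<in> couplings (\<eta> n) \<nu>"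
    "(\<lambda>n. D (\<eta> n) \<mu>) \<longlonglongrightarrow> 0" "(\<lambda>n. \<integral>\<^sup>+z. c z \<partial>\<pi> n) \<longlonglongrightarrow> 0"
proof -
  define \<epsilon> :: "nat \<Rightarrow> ennreal" where "\<epsilon> = (\<lambda>n. ennreal (inverse (Suc n)))"
  have "\<exists>\<eta> \<pi>. \<eta> \<in> prob_measures \<and> \<pi> \<in> couplings \<eta> \<nu> \<and> D \<eta> \<mu> < \<epsilon> n \<and> (\<integral>\<^sup>+z. c z \<partial>\<pi>) < \<epsilon> n"
    for n
  proof -
    have "D_c D c \<nu> \<mu> < \<epsilon> n"
      using assms by (simp add: \<epsilon>_def)
    then obtain \<eta> where \<eta>: "\<eta> \<in> prob_measures" "D \<eta> \<mu> + OT_cost c \<eta> \<nu> < \<epsilon> n"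
      unfolding D_c_def INF_less_iff by blast
    have "D \<eta> \<mu> < \<epsilon> n"
      by (rule order.strict_trans1[OF _ \<eta>(2)]) simp
    moreover have "OT_cost c \<eta> \<nu> < \<epsilon> n"
      by (rule order.strict_trans1[OF _ \<eta>(2)]) simp
    then obtain \<pi> where "\<pi> \<in> couplings \<eta> \<nu>" "(\<integral>\<^sup>+z. c z \<partial>\<pi>) < \<epsilon> n"
      unfolding OT_cost_def INF_less_iff by blast
    ultimately show ?thesis
      using \<eta>(1) by blast
  qed
  then obtain \<eta> \<pi> where \<eta>\<pi>: "\<And>n. \<eta> n \<in> prob_measures" "\<And>n. \<pi> n \<in> couplings (\<eta> n) \<nu>"
    "\<And>n. D (\<eta> n) \<mu> < \<epsilon> n" "\<And>n. (\<integral>\<^sup>+z. c z \<partial>\<pi> n) < \<epsilon> n"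
    by metis
  have "\<epsilon> \<longlonglongrightarrow> 0"
    unfolding \<epsilon>_def using tendsto_ennrealI[OF LIMSEQ_inverse_real_of_nat] by simp
  have squeeze: "x \<longlonglongrightarrow> 0" if "\<And>n. x n < \<epsilon> n" for x :: "nat \<Rightarrow> ennreal"
  proof (rule tendsto_sandwich[where f="\<lambda>_. 0" and h=\<epsilon>])
    show "\<forall>\<^sub>F n in sequentially. x n \<le> \<epsilon> n"
      using that by (simp add: less_imp_le)
  qed (simp_all add: \<open>\<epsilon> \<longlonglongrightarrow> 0\<close>)
  show thesis
    by (rule that[OF \<eta>\<pi>(1,2) squeeze[OF \<eta>\<pi>(3)] squeeze[OF \<eta>\<pi>(4)]])
qed

lemma abs_diff_le_transport_pointwise:
  fixes f :: "'a::metric_space \<Rightarrow> real" and c :: "'a \<times> 'a \<Rightarrow> ennreal"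
  assumes f: "k-lipschitz_on UNIV f" "\<And>x. f x \<in> {0..1}"
    and "0 \<le> \<delta>" "0 < r" "0 < m"
    and sep: "infdist x K < r \<Longrightarrow> infdist y K < r \<Longrightarrow> \<delta> \<le> dist x y \<Longrightarrow> ennreal m < c (x, y)"
  shows "\<bar>f x - f y\<bar> \<le> k * \<delta> + min 1 (infdist x K / r) + min 1 (infdist y K / r)
    + enn2real (min (c (x, y)) (ennreal m)) / m"
proof -
  define h where "h x = min 1 (infdist x K / r)" for x
  define w where "w = enn2real (min (c (x, y)) (ennreal m)) / m"
  have h_bounds: "0 \<le> h x" "h x \<le> 1" for x
    using \<open>0 < r\<close> by (simp_all add: h_def infdist_nonneg)
  have "0 \<le> w"
    using \<open>0 < m\<close> by (simp add: w_def)
  have "0 \<le> k * \<delta>"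
    using lipschitz_on_nonneg[OF f(1)] \<open>0 \<le> \<delta>\<close> by simp
  have "\<bar>f x - f y\<bar> \<le> 1"
    using f(2)[of x] f(2)[of y] by auto
  consider "dist x y < \<delta>" | "r \<le> infdist x K" | "r \<le> infdist y K"
    | "infdist x K < r" "infdist y K < r" "\<delta> \<le> dist x y"
    by linarith
  then have "\<bar>f x - f y\<bar> \<le> k * \<delta> + h x + h y + w"
  proof cases
    case 1
    have "\<bar>f x - f y\<bar> \<le> k * dist x y"
      using lipschitz_onD[OF f(1)] by (simp add: dist_real_def)
    also have "\<dots> \<le> k * \<delta>"
      using 1 lipschitz_on_nonneg[OF f(1)] by (simp add: mult_left_mono)
    finally show ?thesis
      using h_bounds[of x] h_bounds[of y] \<open>0 \<le> w\<close> by linarith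
  next
    case 2
    then have "h x = 1"
      using \<open>0 < r\<close> by (simp add: h_def)
    then show ?thesis
      using h_bounds[of y] \<open>0 \<le> w\<close> \<open>\<bar>f x - f y\<bar> \<le> 1\<close> \<open>0 \<le> k * \<delta>\<close> by linarith
  next
    case 3
    then have "h y = 1"
      using \<open>0 < r\<close> by (simp add: h_def)
    then show ?thesis
      using h_bounds[of x] \<open>0 \<le> w\<close> \<open>\<bar>f x - f y\<bar> \<le> 1\<close> \<open>0 \<le> k * \<delta>\<close> by linarith
  next
    case 4
    then have "w = 1"
      using sep[OF 4] \<open>0 < m\<close> by (simp add: w_def min_absorb2 less_imp_le)
    then show ?thesis
      using h_bounds[of x] h_bounds[of y] \<open>\<bar>f x - f y\<bar> \<le> 1\<close> \<open>0 \<le> k * \<delta>\<close> by linarith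
  qed
  then show ?thesis
    by (simp add: h_def w_def)
qed

lemma abs_integral_diff_le_transport:
  fixes f :: "'a::metric_space \<Rightarrow> real" and c :: "'a \<times> 'a \<Rightarrow> ennreal"
  assumes \<pi>: "\<pi> \<in> couplings \<alpha> \<beta>" and c: "c \<in> borel_measurable borel"
    and f: "k-lipschitz_on UNIV f" "\<And>x. f x \<in> {0..1}"
    and "0 \<le> \<delta>" "0 < r" "0 < m"
    and sep: "\<And>x y. infdist x K < r \<Longrightarrow> infdist y K < r \<Longrightarrow> \<delta> \<le> dist x y \<Longrightarrow> ennreal m < c (x, y)"
  shows "\<bar>(\<integral>x. f x \<partial>\<alpha>) - (\<integral>x. f x \<partial>\<beta>)\<bar> \<le>
    k * \<delta> + (\<integral>x. min 1 (infdist x K / r) \<partial>\<alpha>) + (\<integral>x. min 1 (infdist x K / r) \<partial>\<beta>)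
      + (\<integral>z. enn2real (min (c z) (ennreal m)) \<partial>\<pi>) / m"
proof -
  define h where "h x = min 1 (infdist x K / r)" for x
  define w where "w z = enn2real (min (c z) (ennreal m)) / m" for z
  have h_meas: "h \<in> borel_measurable borel"
    unfolding h_def
    by (intro borel_measurable_continuous_onI continuous_intros continuous_on_infdist)
      (use \<open>0 < r\<close> in auto)
  have h_bounds: "\<bar>h x\<bar> \<le> 1" for x
    using \<open>0 < r\<close> by (simp add: h_def infdist_nonneg)
  have w_meas: "w \<in> borel_measurable borel"
    unfolding w_def using c by measurable
  have w_bounds: "\<bar>w z\<bar> \<le> 1" for z
    using \<open>0 < m\<close> by (auto simp: w_def enn2real_leI min.coboundedI2)
  have \<pi>P: "\<pi> \<in> prob_measures"
    by (rule prob_measures_couplings[OF \<pi>])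
  interpret prob_space \<pi>
    using prob_space_prob_measures[OF \<pi>P] .
  have int: "integrable \<pi> (\<lambda>z. h (fst z))" "integrable \<pi> (\<lambda>z. h (snd z))" "integrable \<pi> w"
    using integrable_couplings[OF \<pi> h_meas h_bounds]
      integrable_prob_measuresI[OF \<pi>P w_meas w_bounds] by auto
  have "\<bar>(\<integral>x. f x \<partial>\<alpha>) - (\<integral>x. f x \<partial>\<beta>)\<bar> \<le> (\<integral>z. k * \<delta> + h (fst z) + h (snd z) + w z \<partial>\<pi>)"
  proof (rule abs_integral_diff_le_coupling[OF \<pi>, where B=1])
    show "f \<in> borel_measurable borel"
      using lipschitz_on_continuous_on[OF f(1)] by (rule borel_measurable_continuous_onI)
    show "\<bar>f x\<bar> \<le> 1" for x
      using f(2)[of x] by auto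
    show "\<bar>f x - f y\<bar> \<le> k * \<delta> + h (fst (x, y)) + h (snd (x, y)) + w (x, y)" for x y
      unfolding h_def w_def using abs_diff_le_transport_pointwise[OF f] sep assms(5-7) by simp
  qed (use int in simp)
  also have "\<dots> = k * \<delta> + (\<integral>x. h x \<partial>\<alpha>) + (\<integral>x. h x \<partial>\<beta>) + (\<integral>z. w z \<partial>\<pi>)"
    using int integral_couplings[OF \<pi> h_meas] by (simp add: prob_space)
  finally show ?thesis
    by (simp add: h_def w_def)
qed

lemma integral_truncated_tendsto_0:
  fixes c :: "'a::topological_space \<Rightarrow> ennreal"
  assumes \<pi>: "\<And>n. \<pi> n \<in> prob_measures" and c: "c \<in> borel_measurable borel"
    and lim: "(\<lambda>n. \<integral>\<^sup>+z. c z \<partial>\<pi> n) \<longlonglongrightarrow> 0" and "0 \<le> m"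
  shows "(\<lambda>n. \<integral>z. enn2real (min (c z) (ennreal m)) \<partial>\<pi> n) \<longlonglongrightarrow> 0"
proof -
  define w where "w z = enn2real (min (c z) (ennreal m))" for z
  have w_meas: "w \<in> borel_measurable borel"
    unfolding w_def using c by measurable
  have w_bounds: "0 \<le> w z" "\<bar>w z\<bar> \<le> m" for z
    using \<open>0 \<le> m\<close> by (auto simp: w_def enn2real_leI min.coboundedI2)
  have w_ennreal: "ennreal (w z) = min (c z) (ennreal m)" for z
    unfolding w_def ennreal_enn2real_if
    using neq_top_trans[OF ennreal_neq_top min.cobounded2] by simp
  have w_integral_nonneg: "0 \<le> (\<integral>z. w z \<partial>\<pi> n)" for n
    by (rule Bochner_Integration.integral_nonneg) (rule w_bounds(1))
  have "ennreal (\<integral>z. w z \<partial>\<pi> n) \<le> (\<integral>\<^sup>+z. c z \<partial>\<pi> n)" for n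
  proof -
    have "integrable (\<pi> n) w"
      using w_bounds(2) by (rule integrable_prob_measuresI[OF \<pi> w_meas])
    then have "ennreal (\<integral>z. w z \<partial>\<pi> n) = (\<integral>\<^sup>+z. ennreal (w z) \<partial>\<pi> n)"
      using w_bounds(1) by (intro nn_integral_eq_integral[symmetric]) simp_all
    also have "\<dots> \<le> (\<integral>\<^sup>+z. c z \<partial>\<pi> n)"
      unfolding w_ennreal by (intro nn_integral_mono) simp
    finally show ?thesis .
  qed
  then have "(\<lambda>n. ennreal (\<integral>z. w z \<partial>\<pi> n)) \<longlonglongrightarrow> 0"
    by (intro tendsto_sandwich[OF _ _ tendsto_const lim]) simp_all
  then have "(\<lambda>n. \<integral>z. w z \<partial>\<pi> n) \<longlonglongrightarrow> 0"
    using tendsto_ennrealD[of "\<lambda>n. \<integral>z. w z \<partial>\<pi> n" 0 sequentially] w_integral_nonneg by simp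
  then show ?thesis
    by (simp add: w_def)
qed

lemma abs_integral_diff_le_of_transport_limit:
  fixes \<mu> \<nu> :: "'a::polish_space measure" and c :: "'a \<times> 'a \<Rightarrow> ennreal" and f :: "'a \<Rightarrow> real"
  assumes lsc: "lsc c" and diag: "\<And>x y. c (x, y) = 0 \<Longrightarrow> x = y"
    and \<mu>: "\<mu> \<in> prob_measures" and \<nu>: "\<nu> \<in> prob_measures"
    and \<pi>: "\<And>n. \<pi> n \<in> couplings (\<eta> n) \<nu>" and \<eta>: "weak_conv \<eta> \<mu>"
    and cost: "(\<lambda>n. \<integral>\<^sup>+z. c z \<partial>\<pi> n) \<longlonglongrightarrow> 0"
    and f: "k-lipschitz_on UNIV f" "\<And>x. f x \<in> {0..1}"
    and "0 < \<delta>" "0 < \<epsilon>"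
  shows "\<bar>(\<integral>x. f x \<partial>\<mu>) - (\<integral>x. f x \<partial>\<nu>)\<bar> \<le> k * \<delta> + 2 * \<epsilon>"
proof -
  \<comment> \<open>\<open>K\<close> must be nonempty, since \<open>infdist x {} = 0\<close>\<close>
  obtain K where K: "compact K" "K \<noteq> {}" and tail: "measure \<mu> (- K) < \<epsilon>" "measure \<nu> (- K) < \<epsilon>"
    using prob_measures_tight_pair[OF \<mu> \<nu> \<open>0 < \<epsilon>\<close>] by blast
  obtain r m where "0 < r" "0 < m"
    and sep: "\<And>x y. infdist x K < r \<Longrightarrow> infdist y K < r \<Longrightarrow> \<delta> \<le> dist x y \<Longrightarrow> ennreal m < c (x, y)"
    using lsc_cost_separated_near_compact[OF lsc diag K \<open>0 < \<delta>\<close>] by blast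
  define h where "h x = min 1 (infdist x K / r)" for x
  have h_cont: "continuous_on UNIV h"
    unfolding h_def by (intro continuous_intros continuous_on_infdist) (use \<open>0 < r\<close> in auto)
  have h_bounds: "\<bar>h x\<bar> \<le> 1" for x
    using \<open>0 < r\<close> by (simp add: h_def infdist_nonneg)
  define W where "W n = (\<integral>z. enn2real (min (c z) (ennreal m)) \<partial>\<pi> n) / m" for n
  have c_meas: "c \<in> borel_measurable borel"
    by (rule borel_measurable_lsc[OF lsc])
  have "(\<lambda>n. \<bar>(\<integral>x. f x \<partial>\<eta> n) - (\<integral>x. f x \<partial>\<nu>)\<bar>) \<longlonglongrightarrow> \<bar>(\<integral>x. f x \<partial>\<mu>) - (\<integral>x. f x \<partial>\<nu>)\<bar>"
    using f
    by (intro tendsto_intros weak_convD[OF \<eta> lipschitz_on_continuous_on[OF f(1)], where B=1])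
      auto
  moreover have "(\<lambda>n. k * \<delta> + (\<integral>x. h x \<partial>\<eta> n) + (\<integral>x. h x \<partial>\<nu>) + W n)
      \<longlonglongrightarrow> k * \<delta> + (\<integral>x. h x \<partial>\<mu>) + (\<integral>x. h x \<partial>\<nu>) + 0 / m"
    unfolding W_def using prob_measures_couplings[OF \<pi>] \<open>0 < m\<close>
    by (intro tendsto_intros weak_convD[OF \<eta> h_cont h_bounds]
        integral_truncated_tendsto_0[OF _ c_meas cost]) auto
  moreover have "\<bar>(\<integral>x. f x \<partial>\<eta> n) - (\<integral>x. f x \<partial>\<nu>)\<bar>
      \<le> k * \<delta> + (\<integral>x. h x \<partial>\<eta> n) + (\<integral>x. h x \<partial>\<nu>) + W n" for n
    unfolding h_def W_def
    using \<open>0 < \<delta>\<close> \<open>0 < r\<close> \<open>0 < m\<close> sep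
    by (intro abs_integral_diff_le_transport[OF \<pi> c_meas f]) auto
  ultimately have "\<bar>(\<integral>x. f x \<partial>\<mu>) - (\<integral>x. f x \<partial>\<nu>)\<bar> \<le> k * \<delta> + (\<integral>x. h x \<partial>\<mu>) + (\<integral>x. h x \<partial>\<nu>)"
    by (intro LIMSEQ_le) auto
  moreover have "(\<integral>x. h x \<partial>\<mu>) < \<epsilon>" "(\<integral>x. h x \<partial>\<nu>) < \<epsilon>"
    using integral_infdist_ramp_le_measure_Compl[OF _ compact_imp_closed[OF K(1)] \<open>0 < r\<close>] \<mu> \<nu> tail
    unfolding h_def by (meson le_less_trans)+
  ultimately show ?thesis
    by linarith
qed

lemma prob_measures_eq_of_transport_limit:
  fixes \<mu> \<nu> :: "'a::polish_space measure" and c :: "'a \<times> 'a \<Rightarrow> ennreal"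
  assumes lsc: "lsc c" and diag: "\<And>x y. c (x, y) = 0 \<Longrightarrow> x = y"
    and \<mu>: "\<mu> \<in> prob_measures" and \<nu>: "\<nu> \<in> prob_measures"
    and \<pi>: "\<And>n. \<pi> n \<in> couplings (\<eta> n) \<nu>" and \<eta>: "weak_conv \<eta> \<mu>"
    and cost: "(\<lambda>n. \<integral>\<^sup>+z. c z \<partial>\<pi> n) \<longlonglongrightarrow> 0"
  shows "\<mu> = \<nu>"
proof (rule prob_measures_eqI_lipschitz[OF \<mu> \<nu>])
  fix f :: "'a \<Rightarrow> real" and k
  assume f: "k-lipschitz_on UNIV f" "\<And>x. f x \<in> {0..1}"
  have "\<bar>(\<integral>x. f x \<partial>\<mu>) - (\<integral>x. f x \<partial>\<nu>)\<bar> \<le> 0 + e" if "0 < e" for e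
  proof -
    define \<delta> where "\<delta> = e / (2 * (k + 1))"
    have "0 \<le> k"
      by (rule lipschitz_on_nonneg[OF f(1)])
    then have "0 < \<delta>" "k * \<delta> \<le> e / 2"
      using \<open>0 < e\<close> by (simp_all add: \<delta>_def field_simps)
    then show ?thesis
      using abs_integral_diff_le_of_transport_limit[OF lsc diag \<mu> \<nu> \<pi> \<eta> cost f \<open>0 < \<delta>\<close>, of "e / 4"]
        \<open>0 < e\<close> by simp
  qed
  then show "(\<integral>x. f x \<partial>\<mu>) = (\<integral>x. f x \<partial>\<nu>)"
    using field_le_epsilon[of "\<bar>(\<integral>x. f x \<partial>\<mu>) - (\<integral>x. f x \<partial>\<nu>)\<bar>" 0] by simp
qed

theorem theorem1:
  fixes D :: "'a::polish_space measure \<Rightarrow> 'a measure \<Rightarrow> ennreal"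
    and c :: "'a \<times> 'a \<Rightarrow> ennreal"
  assumes "pre_divergence D"
    and "lsc c"
    and "\<And>Ms \<mu>. (\<forall>n. Ms n \<in> prob_measures) \<Longrightarrow> \<mu> \<in> prob_measures \<Longrightarrow>
           (\<lambda>n. D (Ms n) \<mu>) \<longlonglongrightarrow> 0 \<Longrightarrow> weak_conv Ms \<mu>"
    and "\<And>x1 x2. c (x1, x2) = 0 \<longleftrightarrow> x1 = x2"
    and "\<mu> \<in> prob_measures" and "\<nu> \<in> prob_measures"
  shows "D_c D c \<nu> \<mu> = 0 \<longleftrightarrow> \<nu> = \<mu>"
proof
  assume "D_c D c \<nu> \<mu> = 0"
  then obtain \<eta> :: "nat \<Rightarrow> 'a measure" and \<pi>
    where "\<And>n. \<eta> n \<in> prob_measures" and \<pi>: "\<And>n. \<pi> n \<in> couplings (\<eta> n) \<nu>"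
    and "(\<lambda>n. D (\<eta> n) \<mu>) \<longlonglongrightarrow> 0" and cost: "(\<lambda>n. \<integral>\<^sup>+z. c z \<partial>\<pi> n) \<longlonglongrightarrow> 0"
    by (rule D_c_eq_0_imp_approximating_couplings) blast
  then have "weak_conv \<eta> \<mu>"
    using assms(3)[OF _ assms(5)] by simp
  then have "\<mu> = \<nu>"
    using assms(4)
    by (intro prob_measures_eq_of_transport_limit[OF assms(2) _ assms(5,6) \<pi> _ cost]) simp_all
  then show "\<nu> = \<mu>" ..
next
  assume "\<nu> = \<mu>"
  have "OT_cost c \<mu> \<mu> = 0"
    using assms(4) by (intro OT_cost_self_eq_0[OF assms(5) borel_measurable_lsc[OF assms(2)]]) simp
  then show "D_c D c \<nu> \<mu> = 0"
    using D_c_self_eq_0[OF assms(1,5)] \<open>\<nu> = \<mu>\<close> by simp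
qed

end
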